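(* For integers $2\leq k\leq n$, $$D(n,k)=(k-1)\, D(n-1,k) + k\, D(n-1,k-1).$$ In addition, $D(n,n)=n!$, $D(n,1)=0$ for $n>1$, and $D(n,k)=0$ for $k>n$.
   Context: A walk of length $n-1$ in a graph is a sequence of $n$ vertices $v_1,\dots,v_n$ such that $\{v_i,v_{i+1}\}$ is an edge for each $i$. $D(n,k)$ denotes the number of walks of length $n-1$ in the complete graph $K_k$ on $k$ labelled vertices (no self-loops) that visit every vertex of $K_k$ at least once. *)

theory Defs
  imports Main
begin

text \<open>Walks of length n-1 in the complete graph K_k on vertex set {0..<k}:
  lists of n vertices from {0..<k} with consecutive vertices adjacent (i.e. distinct,
  since K_k has no self-loops), visiting every vertex at least once.\<close>

definition surj_walks :: "nat \<Rightarrow> nat \<Rightarrow> nat list set" where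
  "surj_walks n k = {w. length w = n \<and> set w = {0..<k}
      \<and> (\<forall>i. Suc i < n \<longrightarrow> w ! i \<noteq> w ! Suc i)}"

definition D :: "nat \<Rightarrow> nat \<Rightarrow> nat" where
  "D n k = card (surj_walks n k)"

end

theory Submission
  imports Defs
begin

text \<open>Removing the last vertex of a surjective walk of length n on a vertex set S leaves a walk
  of length n - 1 that either still covers S (and the last vertex is any of the |S| - 1 vertices
  other than its end) or covers exactly S - {x}, where x is the removed vertex. For |S| = k this
  gives (k - 1) D(n - 1, k) + k D(n - 1, k - 1). The boundary values are read off directly, and
  D(n, n) = n! follows from the recursion since D(n - 1, n) = 0.\<close>

definition surj_walks_on :: "nat \<Rightarrow> 'a set \<Rightarrow> 'a list set" where
  "surj_walks_on n S = {w. length w = n \<and> set w = S \<and> distinct_adj w}"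

lemma surj_walks_conv_surj_walks_on: "surj_walks n k = surj_walks_on n {0..<k}"
  by (auto simp: surj_walks_def surj_walks_on_def distinct_adj_conv_nth)

lemma finite_surj_walks_on: "finite S \<Longrightarrow> finite (surj_walks_on n S)"
  by (rule finite_subset[OF _ finite_lists_length_eq[of S n]]) (auto simp: surj_walks_on_def)

lemma card_surj_walks_on_le_image:
  assumes "inj_on f S" "finite S"
  shows "card (surj_walks_on n S) \<le> card (surj_walks_on n (f ` S))"
proof (rule card_inj_on_le)
  show "inj_on (map f) (surj_walks_on n S)"
    by (rule inj_on_mapI) (use assms(1) in \<open>auto simp: surj_walks_on_def\<close>)
  show "map f ` surj_walks_on n S \<subseteq> surj_walks_on n (f ` S)"
    using assms(1) by (auto simp: surj_walks_on_def distinct_adj_map_iff)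
  show "finite (surj_walks_on n (f ` S))"
    using assms(2) by (simp add: finite_surj_walks_on)
qed

lemma card_surj_walks_on_image:
  assumes "inj_on f S" "finite S"
  shows "card (surj_walks_on n (f ` S)) = card (surj_walks_on n S)"
proof (rule antisym)
  let ?g = "inv_into S f"
  have "card (surj_walks_on n (f ` S)) \<le> card (surj_walks_on n (?g ` f ` S))"
    using assms by (intro card_surj_walks_on_le_image inj_on_inv_into) auto
  then show "card (surj_walks_on n (f ` S)) \<le> card (surj_walks_on n S)"
    using assms(1) by simp
qed (rule card_surj_walks_on_le_image[OF assms])

lemma card_surj_walks_on: "finite S \<Longrightarrow> card (surj_walks_on n S) = D n (card S)"
proof -
  assume "finite S"
  then obtain f where f: "bij_betw f S {0..<card S}"
    using ex_bij_betw_finite_nat by blast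
  then have "card (surj_walks_on n S) = card (surj_walks_on n (f ` S))"
    using \<open>finite S\<close> by (simp add: bij_betw_imp_inj_on card_surj_walks_on_image)
  also have "\<dots> = D n (card S)"
    using f by (simp add: bij_betw_def D_def surj_walks_conv_surj_walks_on)
  finally show ?thesis .
qed

lemma snoc_in_surj_walks_on_iff:
  assumes "v \<noteq> []"
  shows "v @ [x] \<in> surj_walks_on (Suc m) S \<longleftrightarrow>
    v \<in> surj_walks_on m S \<and> x \<in> S - {last v} \<or> x \<in> S \<and> v \<in> surj_walks_on m (S - {x})"
proof -
  have last: "last v \<in> set v"
    and distinct: "distinct_adj (v @ [x]) \<longleftrightarrow> distinct_adj v \<and> last v \<noteq> x"
    using assms by (simp_all add: distinct_adj_append_iff)
  show ?thesis
  proof (cases "x \<in> set v")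
    case True
    then show ?thesis using distinct by (auto simp: surj_walks_on_def insert_absorb)
  next
    case False
    then show ?thesis using distinct last by (auto simp: surj_walks_on_def)
  qed
qed

lemma surj_walks_on_Suc:
  assumes "0 < m"
  shows "surj_walks_on (Suc m) S = (\<lambda>(v, x). v @ [x]) `
    {(v, x). v \<in> surj_walks_on m S \<and> x \<in> S - {last v} \<or> x \<in> S \<and> v \<in> surj_walks_on m (S - {x})}"
    (is "_ = _ ` ?P")
proof (intro equalityI subsetI)
  fix w assume w: "w \<in> surj_walks_on (Suc m) S"
  then obtain v x where vx: "w = v @ [x]" "length v = m"
    by (auto simp: surj_walks_on_def length_Suc_conv_rev)
  with assms have "v \<noteq> []" by auto
  with w vx have "(v, x) \<in> ?P" by (simp add: snoc_in_surj_walks_on_iff)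
  with vx show "w \<in> (\<lambda>(v, x). v @ [x]) ` ?P" by force
next
  fix w assume "w \<in> (\<lambda>(v, x). v @ [x]) ` ?P"
  then obtain v x where vx: "w = v @ [x]" "(v, x) \<in> ?P" by auto
  then have "length v = m" by (auto simp: surj_walks_on_def)
  with assms have "v \<noteq> []" by auto
  with vx show "w \<in> surj_walks_on (Suc m) S" by (simp add: snoc_in_surj_walks_on_iff)
qed

lemma D_Suc:
  assumes "0 < m"
  shows "D (Suc m) k = (k - 1) * D m k + k * D m (k - 1)"
proof -
  let ?S = "{0..<k}"
  let ?A = "Sigma (surj_walks_on m ?S) (\<lambda>v. ?S - {last v})"
  let ?B = "Sigma ?S (\<lambda>x. surj_walks_on m (?S - {x}))"
  have card_A: "card ?A = (k - 1) * D m k"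
  proof -
    have "last v \<in> ?S" if "v \<in> surj_walks_on m ?S" for v
      using that assms last_in_set[of v] by (auto simp: surj_walks_on_def)
    then have "card ?A = (\<Sum>v\<in>surj_walks_on m ?S. k - 1)"
      by (subst card_SigmaI) (auto intro: finite_surj_walks_on)
    then show ?thesis by (simp add: card_surj_walks_on)
  qed
  have card_B: "card ?B = k * D m (k - 1)"
    by (subst card_SigmaI) (auto intro: finite_surj_walks_on simp: card_surj_walks_on)
  have pairs: "{(v, x). v \<in> surj_walks_on m ?S \<and> x \<in> ?S - {last v} \<or>
      x \<in> ?S \<and> v \<in> surj_walks_on m (?S - {x})} = ?A \<union> prod.swap ` ?B"
    by force
  have "v \<notin> surj_walks_on m (?S - {x})" if "v \<in> surj_walks_on m ?S" "x \<in> ?S" for v x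
    using that unfolding surj_walks_on_def by blast
  then have disjoint: "?A \<inter> prod.swap ` ?B = {}"
    by force
  have "D (Suc m) k = card (?A \<union> prod.swap ` ?B)"
    unfolding D_def surj_walks_conv_surj_walks_on surj_walks_on_Suc[OF assms] pairs
    by (rule card_image) (auto intro: inj_onI)
  also have "\<dots> = card ?A + card ?B"
    using disjoint by (subst card_Un_disjoint)
      (auto intro!: finite_surj_walks_on simp: card_image swap_inj_on)
  finally show ?thesis using card_A card_B by simp
qed

lemma D_eq_0_if_less: "n < k \<Longrightarrow> D n k = 0"
proof -
  assume "n < k"
  have "k \<le> n" if "w \<in> surj_walks n k" for w
    using that card_length[of w] by (simp add: surj_walks_def)
  then have "surj_walks n k = {}"
    using \<open>n < k\<close> by (meson equals0I not_le)
  then show ?thesis by (simp add: D_def)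
qed

lemma D_1_eq_0: "1 < n \<Longrightarrow> D n 1 = 0"
proof -
  assume "1 < n"
  have False if "w \<in> surj_walks n 1" for w
  proof -
    have "length w = n" "set w = {0}" "w ! 0 \<noteq> w ! 1"
      using that \<open>1 < n\<close> unfolding surj_walks_def by auto
    moreover have "w ! 0 \<in> set w" "w ! 1 \<in> set w"
      using \<open>length w = n\<close> \<open>1 < n\<close> by (simp_all only: nth_mem less_trans[OF zero_less_one])
    ultimately show False by simp
  qed
  then have "surj_walks n 1 = {}" by blast
  then show ?thesis by (simp add: D_def)
qed

lemma D_diag: "D n n = fact n"
proof (induction n)
  case 0
  have "surj_walks 0 0 = {[]}" by (simp add: surj_walks_def)
  then show ?case by (simp add: D_def)
next
  case (Suc n)
  show ?case
  proof (cases "n = 0")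
    case True
    have "surj_walks 1 1 = {[0]}"
    proof (intro set_eqI iffI)
      fix w assume "w \<in> surj_walks 1 1"
      then obtain a where "w = [a]" "set w = {0}"
        unfolding surj_walks_def by (auto simp: length_Suc_conv)
      then show "w \<in> {[0]}" by simp
    qed (simp add: surj_walks_def)
    then show ?thesis using True by (simp add: D_def)
  next
    case False
    then show ?thesis
      using D_Suc[of n "Suc n"] D_eq_0_if_less[of n "Suc n"] Suc.IH by simp
  qed
qed

theorem mainTheorem3:
  shows "(\<forall>n k. 2 \<le> k \<and> k \<le> n \<longrightarrow> D n k = (k - 1) * D (n - 1) k + k * D (n - 1) (k - 1))
       \<and> (\<forall>n. D n n = fact n)
       \<and> (\<forall>n. n > 1 \<longrightarrow> D n 1 = 0)
       \<and> (\<forall>n k. k > n \<longrightarrow> D n k = 0)"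
proof (intro conjI allI impI)
  fix n k :: nat
  assume "2 \<le> k \<and> k \<le> n"
  then show "D n k = (k - 1) * D (n - 1) k + k * D (n - 1) (k - 1)"
    using D_Suc[of "n - 1" k] by simp
qed (simp_all add: D_diag D_1_eq_0[unfolded One_nat_def] D_eq_0_if_less)

end
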